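(* Let $\beta \in \mathcal{P}$ and $\alpha \in E$ satisfy $\alpha^{q+1} = \beta^q + \beta^{q^2+q+1}$. Then the equation $X^{q+1} + \alpha X + \beta = 0$ has $q+1$ roots in $E$, and all of them lie in $\mathcal{P}$.
   Context: Let $q = 2^m$ with $m \ge 1$, and let $E = \mathbb{F}_{q^4}$. Define $\mathcal{P} = \{x \in E \mid x^{q^3+q^2+q+1} = 1\}$. *)

theory Defs
  imports Main
begin

definition P_set :: "nat \<Rightarrow> 'a::field set" where
  "P_set q = {x. x ^ (q^3 + q^2 + q + 1) = 1}"

end

theory Submission
  imports Defs "HOL-Computational_Algebra.Polynomial" "HOL-Computational_Algebra.Primes"
begin

(* The field has characteristic 2. Put delta = beta^(q^2+1), a (q+1)-th root of unity, and
   epsilon = delta^(q/2+1), its square root, again with epsilon^(q+1) = 1. The hypothesis on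
   alpha reads alpha^(q+1) = beta^q (1 + epsilon)^2, which lets us write
   alpha = b^q (1 + epsilon) and beta = b^(q+1) epsilon with b in P.
   If epsilon = 1 the equation is X^(q+1) = b^(q+1), whose roots are b times the (q+1)-th
   roots of unity. Otherwise X = b + b u / Y with u = 1 + 1/epsilon turns it into the
   Artin-Schreier equation Y^q + Y = u; as u has trace 0 down to F_q, it has q solutions.
   The roots are then b and the b Y^(q-1), which lie in P because
   (Y^(q-1))^(q^3+q^2+q+1) = Y^(q^4-1) = 1.
   Both counts (q fixed points of Frobenius, q+1 roots of unity) and the surjectivity of
   Y |-> Y^q + Y onto the trace-0 elements come from one fibre count: the fibres and the image
   of these maps are bounded by polynomial degrees, and q^4 leaves no slack. *)

lemma field_power_card_eq_same:
  fixes x :: "'a::{field,finite}"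
  shows "x ^ card (UNIV :: 'a set) = x"
proof (cases "x = 0")
  case False
  have "Suc (card (UNIV :: 'a set) - 1) = card (UNIV :: 'a set)"
    using finite_UNIV_card_ge_0[where ?'a = 'a] by simp
  moreover have "(\<Prod>y\<in>UNIV-{0}. x * y) = x ^ (card (UNIV :: 'a set) - 1) * \<Prod>(UNIV-{0})"
    by (simp add: prod.distrib card_Diff_singleton)
  ultimately have "x * (\<Prod>y\<in>UNIV-{0}. x * y) = x ^ card (UNIV :: 'a set) * \<Prod>(UNIV-{0})"
    by (metis mult.assoc power_Suc)
  also have "(\<Prod>y\<in>UNIV-{0}. x * y) = \<Prod>(UNIV-{0})"
    by (rule prod.reindex_bij_witness[of _ "\<lambda>y. y / x" "\<lambda>y. x * y"]) (use False in auto)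
  finally show ?thesis
    by simp
qed (use finite_UNIV_card_ge_0[where ?'a = 'a] in simp)

lemma field_power_card_minus_one:
  fixes x :: "'a::{field,finite}"
  assumes "x \<noteq> 0"
  shows "x ^ (card (UNIV :: 'a set) - 1) = 1"
proof -
  have "Suc (card (UNIV :: 'a set) - 1) = card (UNIV :: 'a set)"
    using finite_UNIV_card_ge_0[where ?'a = 'a] by simp
  then have "x * x ^ (card (UNIV :: 'a set) - 1) = x * 1"
    using field_power_card_eq_same[of x] by (metis mult_1_right power_Suc)
  then show ?thesis
    using assms by simp
qed

lemma CHAR_eq_2_if_even_card:
  assumes "even (card (UNIV :: 'a::{field,finite} set))"
  shows "CHAR('a) = 2"
proof (rule CHAR_eq_posI)
  have "(-1 :: 'a) = 1"
    using field_power_card_eq_same[of "-1 :: 'a"] assms by simp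
  then show "of_nat 2 = (0 :: 'a)"
    by (metis add_eq_0_iff of_nat_numeral one_add_one)
  show "of_nat x \<noteq> (0 :: 'a)" if "0 < x" "x < 2" for x
    using that by (simp add: less_2_cases_iff)
qed simp

lemma card_roots_monic_le:
  fixes r :: "'a::field poly"
  assumes "degree r < n"
  shows "card {x. x ^ n + poly r x = 0} \<le> n"
proof -
  define p where "p = monom 1 n + r"
  have deg: "degree p = n"
    unfolding p_def using assms by (subst degree_add_eq_left) (auto simp: degree_monom_eq)
  then have "p \<noteq> 0"
    using assms by auto
  then have "card {x. poly p x = 0} \<le> n"
    using card_poly_roots_bound deg by fastforce
  then show ?thesis
    by (simp add: p_def poly_monom)
qed

lemma card_eq_mult_card_image:
  assumes "finite A" and "\<And>x. x \<in> A \<Longrightarrow> card {y\<in>A. g y = g x} = k"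
  shows "card A = k * card (g ` A)"
proof -
  have "card A = card (\<Union>z\<in>g ` A. {y\<in>A. g y = z})"
    by (rule arg_cong[where f = card]) auto
  also have "\<dots> = (\<Sum>z\<in>g ` A. card {y\<in>A. g y = z})"
    by (rule card_UN_disjoint) (use assms in auto)
  also have "\<dots> = (\<Sum>z\<in>g ` A. k)"
    by (rule sum.cong) (use assms in auto)
  finally show ?thesis
    by simp
qed

lemma fibres_and_image_tight:
  assumes "finite A" "finite B" "g ` A \<subseteq> B"
    and "\<And>x. x \<in> A \<Longrightarrow> card {y\<in>A. g y = g x} = c"
    and "c \<le> a" "card B \<le> b" "card A = a * b" "0 < a * b"
  shows "c = a" and "g ` A = B"
proof -
  have image_le: "card (g ` A) \<le> b"
    using card_mono[OF assms(2,3)] assms(6) by linarith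
  have prod: "c * card (g ` A) = a * b"
    using card_eq_mult_card_image[OF assms(1,4)] assms(7) by simp
  show "c = a"
  proof (rule ccontr)
    assume "c \<noteq> a"
    then have "c * b < a * b"
      using assms(5,8) by simp
    moreover have "c * card (g ` A) \<le> c * b"
      using image_le by simp
    ultimately show False
      using prod by simp
  qed
  then have "card (g ` A) = b"
    using prod assms(8) by simp
  then show "g ` A = B"
    using card_subset_eq[OF assms(2,3)] assms(6) card_mono[OF assms(2,3)] by simp
qed

lemma card_additive_fibre:
  fixes L :: "'a::ab_group_add \<Rightarrow> 'b::ab_group_add"
  assumes "\<And>x y. L (x + y) = L x + L y"
  shows "card {y. L y = L c} = card {t. L t = 0}"
proof -
  have L_minus: "L (y - c) = L y - L c" for y
    using assms[of "y - c" c] by (simp add: algebra_simps)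
  have "{y. L y = L c} = (\<lambda>t. c + t) ` {t. L t = 0}"
  proof (intro set_eqI iffI)
    fix y assume "y \<in> {y. L y = L c}"
    then show "y \<in> (\<lambda>t. c + t) ` {t. L t = 0}"
      using L_minus by (intro image_eqI[of _ _ "y - c"]) auto
  qed (use assms in auto)
  then show ?thesis
    by (simp add: card_image)
qed

lemma card_power_eq_power:
  fixes c :: "'a::field"
  assumes "c \<noteq> 0"
  shows "card {y. y ^ n = c ^ n} = card {t::'a. t ^ n = 1}"
proof -
  have "{y. y ^ n = c ^ n} = (\<lambda>t. c * t) ` {t. t ^ n = 1}"
  proof (intro set_eqI iffI)
    fix y assume "y \<in> {y. y ^ n = c ^ n}"
    then show "y \<in> (\<lambda>t. c * t) ` {t. t ^ n = 1}"
      using assms by (intro image_eqI[of _ _ "y / c"]) (auto simp: power_divide)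
  qed (auto simp: power_mult_distrib)
  also have "card \<dots> = card {t::'a. t ^ n = 1}"
    by (rule card_image) (use assms in \<open>simp add: inj_on_def\<close>)
  finally show ?thesis .
qed

lemma P_exponent_factor: "q ^ 3 + q ^ 2 + q + 1 = (q + 1) * (q ^ 2 + 1 :: nat)"
  by (simp add: algebra_simps power2_eq_square power3_eq_cube)

lemma P_set_nonzero: "(x::'a::field) \<in> P_set q \<Longrightarrow> x \<noteq> 0"
  by (auto simp: P_set_def)

lemma P_set_mult: "x \<in> P_set q \<Longrightarrow> y \<in> P_set q \<Longrightarrow> (x::'a::field) * y \<in> P_set q"
  unfolding P_set_def by (simp only: mem_Collect_eq power_mult_distrib) simp

context
  fixes q m :: nat
  assumes m_ge_1: "m \<ge> 1" and q_def: "q = 2 ^ m"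
    and card_UNIV: "card (UNIV :: 'a::{field,finite} set) = q ^ 4"
begin

lemma q_ge_2: "q \<ge> 2"
  using power_increasing[of 1 m "2::nat"] m_ge_1 q_def by simp

lemma CHAR_2: "CHAR('a) = 2"
  using card_UNIV q_def m_ge_1 by (intro CHAR_eq_2_if_even_card) simp

lemma two_eq_zero: "(2::'a) = 0"
  using of_nat_CHAR[where ?'a = 'a] by (simp add: CHAR_2)

lemma add_eq_0_iff_eq: "(x::'a) + y = 0 \<longleftrightarrow> x = y"
  using uminus_CHAR_2[OF CHAR_2, of x] add_eq_0_iff[of x y] by auto

lemma add_self: "(x::'a) + x = 0"
  by (rule add_eq_0_iff_eq[THEN iffD2]) (rule refl)

lemma power_q_power_add: "((x::'a) + y) ^ (q ^ k) = x ^ (q ^ k) + y ^ (q ^ k)"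
  by (rule freshmans_dream'[where n = "m * k"]) (simp_all add: CHAR_2 q_def power_mult)

lemma power_q_add: "((x::'a) + y) ^ q = x ^ q + y ^ q"
  using power_q_power_add[of x y 1] by simp

lemma power_q4: "(x::'a) ^ (q ^ 4) = x"
  using field_power_card_eq_same[of x] card_UNIV by simp

lemma trace_power_q_add_self:
  fixes Y :: 'a
  defines "u \<equiv> Y ^ q + Y"
  shows "u ^ (q^3) + u ^ (q^2) + u ^ q + u = 0"
proof -
  have pow: "(Y ^ q + Y) ^ (q ^ k) = Y ^ (q ^ Suc k) + Y ^ (q ^ k)" for k
    by (simp add: power_q_power_add flip: power_mult)
  have "u ^ (q^3) + u ^ (q^2) + u ^ q + u
      = (Y ^ (q^4) + Y ^ (q^3)) + (Y ^ (q^3) + Y ^ (q^2)) + (Y ^ (q^2) + Y ^ q) + (Y ^ q + Y)"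
    using pow[of 3] pow[of 2] pow[of 1] by (simp add: u_def power2_eq_square)
  also have "\<dots> = Y ^ (q^4) + Y + 2 * (Y ^ (q^3) + Y ^ (q^2) + Y ^ q)"
    by (simp add: algebra_simps)
  also have "\<dots> = 0"
    by (simp add: power_q4 two_eq_zero add_self)
  finally show ?thesis .
qed

lemma kernel_and_range_power_q_add_self:
  shows "card {t::'a. t ^ q + t = 0} = q"
    and "range (\<lambda>Y::'a. Y ^ q + Y) = {u. u ^ (q^3) + u ^ (q^2) + u ^ q + u = 0}"
proof -
  define L where "L = (\<lambda>Y::'a. Y ^ q + Y)"
  define Z where "Z = {u::'a. u ^ (q^3) + u ^ (q^2) + u ^ q + u = 0}"
  have L_add: "L (x + y) = L x + L y" for x y
    unfolding L_def by (simp add: power_q_add algebra_simps)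
  have fibres: "card {y\<in>UNIV. L y = L x} = card {t. L t = 0}" for x
    using card_additive_fibre[of L x] L_add by simp
  have kernel_le: "card {t. L t = 0} \<le> q"
    using card_roots_monic_le[of "[:0, 1:]" q] q_ge_2 by (simp add: L_def)
  have Z_le: "card Z \<le> q ^ 3"
  proof -
    define r where "r = monom 1 (q^2) + monom 1 q + [:0, 1::'a:]"
    have "q < q ^ 2" "q ^ 2 < q ^ 3"
      using q_ge_2 power_strict_increasing[of 1 2 q] power_strict_increasing[of 2 3 q] by simp_all
    then have "degree r \<le> q ^ 2"
      unfolding r_def by (intro degree_add_le order.trans[OF degree_monom_le]) auto
    then have "degree r < q ^ 3"
      using \<open>q ^ 2 < q ^ 3\<close> by linarith
    then show ?thesis
      using card_roots_monic_le[of r "q^3"] by (simp add: r_def Z_def poly_monom add.assoc)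
  qed
  have "range L \<subseteq> Z"
    using trace_power_q_add_self by (auto simp: L_def Z_def)
  moreover have "card (UNIV :: 'a set) = q * q ^ 3" "0 < q * q ^ 3"
    using card_UNIV q_ge_2 by (simp_all flip: power_Suc)
  ultimately show "card {t::'a. t ^ q + t = 0} = q" and "range (\<lambda>Y. Y ^ q + Y) = Z"
    using fibres_and_image_tight[of UNIV Z L, OF _ _ _ fibres kernel_le Z_le] by (simp_all add: L_def)
qed

lemma card_power_q_add_self_eq:
  assumes "(u::'a) ^ (q^3) + u ^ (q^2) + u ^ q + u = 0"
  shows "card {Y. Y ^ q + Y = u} = q"
proof -
  obtain c where c: "u = c ^ q + c"
    using assms kernel_and_range_power_q_add_self(2) by blast
  have "card {Y. Y ^ q + Y = c ^ q + c} = card {t::'a. t ^ q + t = 0}"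
    by (rule card_additive_fibre) (simp add: power_q_add algebra_simps)
  then show ?thesis
    using kernel_and_range_power_q_add_self(1) c by simp
qed

lemma roots_of_unity_power_q_plus_1:
  shows "card {z::'a. z ^ (q + 1) = 1} = q + 1"
    and "(\<lambda>z::'a. z ^ (q + 1)) ` (UNIV - {0}) = {w. w ^ ((q - 1) * (q^2 + 1)) = 1}"
proof -
  define k where "k = (q - 1) * (q^2 + 1)"
  define g where "g = (\<lambda>z::'a. z ^ (q + 1))"
  have k_pos: "0 < k"
    using q_ge_2 by (simp add: k_def)
  have q4_minus_1: "q ^ 4 - 1 = (q + 1) * k"
  proof -
    obtain s where "q = Suc s"
      using q_ge_2 by (cases q) auto
    then show ?thesis
      by (simp add: k_def algebra_simps power2_eq_square power4_eq_xxxx)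
  qed
  have card_units: "card (UNIV - {0::'a}) = (q + 1) * k"
    using card_UNIV q4_minus_1 by (simp add: card_Diff_singleton)
  have fibres: "card {y \<in> UNIV - {0}. g y = g x} = card {t::'a. t ^ (q + 1) = 1}"
    if "x \<in> UNIV - {0}" for x
  proof -
    have "{y \<in> UNIV - {0}. g y = g x} = {y. y ^ (q + 1) = x ^ (q + 1)}"
      using that by (auto simp: g_def)
    then show ?thesis
      using card_power_eq_power[of x "q + 1"] that by simp
  qed
  have roots_le: "card {t::'a. t ^ n = 1} \<le> n" if "0 < n" for n
    using card_roots_monic_le[of "[:-1:]" n] that by simp
  have "g ` (UNIV - {0}) \<subseteq> {w. w ^ k = 1}"
  proof
    fix w assume "w \<in> g ` (UNIV - {0})"
    then obtain z where "z \<noteq> 0" "w = z ^ (q + 1)"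
      by (auto simp: g_def)
    then have "w ^ k = z ^ ((q + 1) * k)"
      by (simp only: power_mult)
    also have "\<dots> = z ^ (card (UNIV :: 'a set) - 1)"
      by (simp only: card_UNIV q4_minus_1)
    also have "\<dots> = 1"
      using field_power_card_minus_one[OF \<open>z \<noteq> 0\<close>] .
    finally show "w \<in> {w. w ^ k = 1}"
      by simp
  qed
  from fibres_and_image_tight[OF _ _ this fibres _ roots_le card_units] k_pos roots_le[of "q + 1"]
  show "card {z::'a. z ^ (q + 1) = 1} = q + 1" and "g ` (UNIV - {0}) = {w. w ^ k = 1}"
    by simp_all
qed

lemma power_q_div_self_in_P_set:
  assumes "(y::'a) \<noteq> 0"
  shows "y ^ q / y \<in> P_set q"
proof -
  have exponent: "(q - 1) * (q^3 + q^2 + q + 1) = q ^ 4 - 1"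
  proof -
    obtain s where "q = Suc s"
      using q_ge_2 by (cases q) auto
    then show ?thesis
      by (simp add: algebra_simps power2_eq_square power3_eq_cube power4_eq_xxxx)
  qed
  have "(y ^ q / y) ^ (q^3 + q^2 + q + 1) = (y ^ (q - 1)) ^ (q^3 + q^2 + q + 1)"
    using assms q_ge_2 by (simp add: power_diff)
  also have "\<dots> = y ^ (card (UNIV :: 'a set) - 1)"
    by (simp only: card_UNIV exponent flip: power_mult)
  also have "\<dots> = 1"
    using field_power_card_minus_one[OF assms] .
  finally show ?thesis
    by (simp add: P_set_def)
qed

lemma roots_power_q_plus_1_eq:
  assumes "(b::'a) \<in> P_set q"
  shows "card {x. x ^ (q + 1) = b ^ (q + 1)} = q + 1 \<and> {x. x ^ (q + 1) = b ^ (q + 1)} \<subseteq> P_set q"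
proof
  show "card {x. x ^ (q + 1) = b ^ (q + 1)} = q + 1"
    unfolding card_power_eq_power[OF P_set_nonzero[OF assms]]
    by (rule roots_of_unity_power_q_plus_1(1))
  show "{x. x ^ (q + 1) = b ^ (q + 1)} \<subseteq> P_set q"
  proof
    fix x assume "x \<in> {x. x ^ (q + 1) = b ^ (q + 1)}"
    then have "x ^ (q^3 + q^2 + q + 1) = b ^ (q^3 + q^2 + q + 1)"
      by (simp only: mem_Collect_eq P_exponent_factor power_mult)
    then show "x \<in> P_set q"
      using assms by (simp add: P_set_def)
  qed
qed

lemma normal_form_shift:
  fixes b D \<epsilon> :: 'a
  shows "(b + D) ^ (q + 1) + b ^ q * (1 + \<epsilon>) * (b + D) + b ^ q * b * \<epsilon>
    = b ^ q * \<epsilon> * D + b * D ^ q + D ^ q * D"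
proof -
  have "(b + D) ^ (q + 1) + b ^ q * (1 + \<epsilon>) * (b + D) + b ^ q * b * \<epsilon>
      = (b ^ q + D ^ q) * (b + D) + b ^ q * (1 + \<epsilon>) * (b + D) + b ^ q * b * \<epsilon>"
    by (simp add: power_q_add mult.commute)
  also have "\<dots> = b ^ q * \<epsilon> * D + b * D ^ q + D ^ q * D
      + 2 * (b ^ q * b + b ^ q * D + b ^ q * b * \<epsilon>)"
    by (simp add: algebra_simps)
  finally show ?thesis
    by (simp add: two_eq_zero)
qed

lemma normal_form_substitution:
  fixes b D Y u \<epsilon> :: 'a
  assumes "D * Y = b * u" and "u ^ q = \<epsilon> * u"
  shows "Y ^ q * Y * ((b + D) ^ (q + 1) + b ^ q * (1 + \<epsilon>) * (b + D) + b ^ q * b * \<epsilon>)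
    = b ^ q * b * \<epsilon> * u * (Y ^ q + Y + u)"
proof -
  have DY_q: "D ^ q * Y ^ q = b ^ q * (\<epsilon> * u)"
    using assms by (metis power_mult_distrib)
  have "Y ^ q * Y * (b ^ q * \<epsilon> * D + b * D ^ q + D ^ q * D)
      = b ^ q * \<epsilon> * (D * Y) * Y ^ q + b * (D ^ q * Y ^ q) * Y + (D ^ q * Y ^ q) * (D * Y)"
    by (simp add: algebra_simps)
  also have "\<dots> = b ^ q * b * \<epsilon> * u * (Y ^ q + Y + u)"
    unfolding assms(1) DY_q by (simp add: algebra_simps)
  finally show ?thesis
    by (simp only: normal_form_shift)
qed

lemma roots_normal_form_eq:
  fixes b u \<epsilon> :: 'a
  assumes "b \<noteq> 0" "u \<noteq> 0" "u ^ q = \<epsilon> * u"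
  shows "{x. x ^ (q + 1) + b ^ q * (1 + \<epsilon>) * x + b ^ q * b * \<epsilon> = 0}
    = insert b ((\<lambda>Y. b + b * u / Y) ` {Y. Y ^ q + Y = u})"
    (is "{x. ?f x = 0} = _")
proof (intro set_eqI iffI)
  have "\<epsilon> \<noteq> 0"
    using assms(2,3) by auto
  then have nonzero: "b ^ q * b * \<epsilon> * u \<noteq> 0"
    using assms(1,2) by simp
  fix x
  show "x \<in> insert b ((\<lambda>Y. b + b * u / Y) ` {Y. Y ^ q + Y = u})" if "x \<in> {x. ?f x = 0}"
  proof (cases "x = b")
    case False
    define Y where "Y = b * u / (x - b)"
    have "(x - b) * Y = b * u"
      using False by (simp add: Y_def)
    from normal_form_substitution[OF this assms(3)] that nonzero
    have "Y ^ q + Y + u = 0"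
      by simp
    then have "Y ^ q + Y = u"
      by (metis add_eq_0_iff_eq)
    moreover have "x = b + b * u / Y"
      using False assms(1,2) by (simp add: Y_def)
    ultimately show ?thesis
      by blast
  qed simp
  show "x \<in> {x. ?f x = 0}" if "x \<in> insert b ((\<lambda>Y. b + b * u / Y) ` {Y. Y ^ q + Y = u})"
    using that
  proof (elim insertE imageE)
    assume "x = b"
    then show ?thesis
      using normal_form_shift[of b 0 \<epsilon>] q_ge_2 by simp
  next
    fix Y assume x: "x = b + b * u / Y" and "Y \<in> {Y. Y ^ q + Y = u}"
    then have "Y ^ q + Y + u = 0" "Y \<noteq> 0"
      using assms(2) add_self[of u] q_ge_2 by auto
    then have "Y ^ q * Y * ?f x = 0"
      using normal_form_substitution[of "b * u / Y" Y b u \<epsilon>] assms(3) x by simp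
    then show ?thesis
      using \<open>Y \<noteq> 0\<close> by simp
  qed
qed

lemma artin_schreier_parameter:
  fixes \<epsilon> :: 'a
  assumes "\<epsilon> ^ (q + 1) = 1" "\<epsilon> \<noteq> 1" and u_def: "u = 1 + inverse \<epsilon>"
  shows "u \<noteq> 0" and "u ^ q = \<epsilon> * u" and "card {Y. Y ^ q + Y = u} = q"
proof -
  have "\<epsilon> \<noteq> 0"
    using assms(1) by auto
  have eps_q: "\<epsilon> ^ q = inverse \<epsilon>"
    using assms(1) \<open>\<epsilon> \<noteq> 0\<close> by (simp add: field_simps)
  have u_q: "u ^ q = 1 + \<epsilon>"
    by (simp add: u_def power_q_add power_inverse eps_q)
  show "u \<noteq> 0"
    using assms(2) by (auto simp: u_def add_eq_0_iff_eq inverse_eq_iff_eq)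
  have "\<epsilon> * u = 1 + \<epsilon>"
    using \<open>\<epsilon> \<noteq> 0\<close> by (simp add: u_def field_simps)
  then show "u ^ q = \<epsilon> * u"
    using u_q by simp
  have "u ^ (q^2) = (1 + \<epsilon>) ^ q"
    by (simp add: power2_eq_square power_mult u_q)
  also have "\<dots> = u"
    by (simp add: power_q_add eps_q u_def)
  finally have u_q2: "u ^ (q^2) = u" .
  have "u ^ (q^3) + u ^ (q^2) + u ^ q + u = 2 * (u ^ q + u)"
    by (simp add: power3_eq_cube power_mult u_q2 flip: power2_eq_square)
  then show "card {Y. Y ^ q + Y = u} = q"
    by (simp add: two_eq_zero card_power_q_add_self_eq)
qed

lemma roots_normal_form:
  fixes b \<epsilon> :: 'a
  assumes "b \<in> P_set q" "\<epsilon> ^ (q + 1) = 1"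
  shows "card {x. x ^ (q + 1) + b ^ q * (1 + \<epsilon>) * x + b ^ q * b * \<epsilon> = 0} = q + 1
    \<and> {x. x ^ (q + 1) + b ^ q * (1 + \<epsilon>) * x + b ^ q * b * \<epsilon> = 0} \<subseteq> P_set q"
proof (cases "\<epsilon> = 1")
  case True
  then have "{x. x ^ (q + 1) + b ^ q * (1 + \<epsilon>) * x + b ^ q * b * \<epsilon> = 0} = {x. x ^ (q + 1) = b ^ (q + 1)}"
    by (simp add: two_eq_zero add_eq_0_iff_eq mult.commute)
  then show ?thesis
    using roots_power_q_plus_1_eq[OF assms(1)] by simp
next
  case False
  define u where "u = 1 + inverse \<epsilon>"
  note u = artin_schreier_parameter[OF assms(2) False u_def]
  have "b \<noteq> 0"
    using P_set_nonzero[OF assms(1)] .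
  define S where "S = {Y. Y ^ q + Y = u}"
  have "0 \<notin> S"
    using u(1) q_ge_2 by (simp add: S_def zero_power)
  have roots: "{x. x ^ (q + 1) + b ^ q * (1 + \<epsilon>) * x + b ^ q * b * \<epsilon> = 0}
      = insert b ((\<lambda>Y. b + b * u / Y) ` S)"
    unfolding S_def by (rule roots_normal_form_eq[OF \<open>b \<noteq> 0\<close> u(1,2)])
  have "b \<notin> (\<lambda>Y. b + b * u / Y) ` S" "inj_on (\<lambda>Y. b + b * u / Y) S"
    using \<open>b \<noteq> 0\<close> u(1) \<open>0 \<notin> S\<close> by (auto simp: inj_on_def)
  then have "card {x. x ^ (q + 1) + b ^ q * (1 + \<epsilon>) * x + b ^ q * b * \<epsilon> = 0} = q + 1"
    using u(3) unfolding roots by (simp add: card_image S_def)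
  moreover have "b + b * u / Y \<in> P_set q" if "Y \<in> S" for Y
  proof -
    have "Y \<noteq> 0" "Y ^ q = Y + u"
      using that \<open>0 \<notin> S\<close> by (auto simp: S_def add.assoc add_self two_eq_zero)
    then have "b + b * u / Y = b * (Y ^ q / Y)"
      by (simp add: field_simps)
    then show ?thesis
      using P_set_mult[OF assms(1) power_q_div_self_in_P_set[OF \<open>Y \<noteq> 0\<close>]] by simp
  qed
  ultimately show ?thesis
    unfolding roots using assms(1) by auto
qed

lemma exists_power_q_plus_1_root:
  assumes "(\<beta>::'a) ^ (q^2 + 1) = 1"
  shows "\<exists>b. b \<noteq> 0 \<and> b ^ q * b = \<beta>"
proof -
  have "\<beta> ^ ((q - 1) * (q^2 + 1)) = (\<beta> ^ (q^2 + 1)) ^ (q - 1)"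
    by (simp only: mult.commute[of "q - 1"] power_mult)
  then have "\<beta> ^ ((q - 1) * (q^2 + 1)) = 1"
    using assms by simp
  then have "\<beta> \<in> (\<lambda>z. z ^ (q + 1)) ` (UNIV - {0})"
    using roots_of_unity_power_q_plus_1(2) by blast
  then show ?thesis
    by (auto simp: mult.commute)
qed

lemma normal_form_coefficients:
  fixes \<alpha> \<beta> \<epsilon> :: 'a
  assumes "\<alpha> \<noteq> 0" "\<epsilon> ^ (q + 1) = 1" "\<alpha> ^ (q + 1) = \<beta> ^ q * (1 + \<epsilon>) ^ 2"
  shows "\<exists>b. \<alpha> = b ^ q * (1 + \<epsilon>) \<and> \<beta> = b ^ q * b * \<epsilon>"
proof -
  define b where "b = \<beta> * (1 + \<epsilon>) / (\<alpha> * \<epsilon>)"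
  have "\<epsilon> \<noteq> 0"
    using assms(2) by auto
  have eps_q: "\<epsilon> ^ q = inverse \<epsilon>"
    using assms(2) \<open>\<epsilon> \<noteq> 0\<close> by (simp add: field_simps)
  have "b ^ q = \<beta> ^ q * (1 + \<epsilon>) ^ q / (\<alpha> ^ q * \<epsilon> ^ q)"
    by (simp add: b_def power_divide power_mult_distrib)
  also have "(1 + \<epsilon>) ^ q = (1 + \<epsilon>) / \<epsilon>"
    using \<open>\<epsilon> \<noteq> 0\<close> by (simp add: power_q_add eps_q field_simps)
  finally have b_q: "b ^ q = \<beta> ^ q * (1 + \<epsilon>) / \<alpha> ^ q"
    using assms(1) \<open>\<epsilon> \<noteq> 0\<close> by (simp add: eps_q field_simps) (metis distrib_left mult_left_cancel)
  have alpha: "\<alpha> ^ q * \<alpha> = \<beta> ^ q * (1 + \<epsilon>) ^ 2"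
    using assms(3) by (simp add: mult.commute)
  have "b ^ q * (1 + \<epsilon>) = \<alpha>"
    using assms(1) alpha by (simp add: b_q power2_eq_square field_simps)
  moreover have "b ^ q * b * \<epsilon> = \<beta> * (\<beta> ^ q * (1 + \<epsilon>) ^ 2) / (\<alpha> ^ q * \<alpha>)"
    unfolding b_q using assms(1) \<open>\<epsilon> \<noteq> 0\<close> by (simp add: b_def power2_eq_square field_simps)
  then have "b ^ q * b * \<epsilon> = \<beta>"
    using assms(1) by (simp flip: alpha)
  ultimately show ?thesis
    by metis
qed

lemma normal_form_in_P_set:
  fixes b \<beta> \<epsilon> :: 'a
  assumes "\<epsilon> ^ (q + 1) = 1" "\<beta> = b ^ q * b * \<epsilon>" "\<beta> ^ (q^2 + 1) = \<epsilon> ^ 2" "\<beta> \<noteq> 0"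
  shows "b \<in> P_set q"
proof -
  have "\<epsilon> \<noteq> 0"
    using assms(1) by auto
  have "q^2 + 1 = (q + 1) * (q - 1) + 2"
    using q_ge_2 by (cases q) (simp_all add: power2_eq_square algebra_simps)
  then have "\<epsilon> ^ (q^2 + 1) = (\<epsilon> ^ (q + 1)) ^ (q - 1) * \<epsilon> ^ 2"
    by (simp only: power_add power_mult)
  then have eps: "\<epsilon> ^ (q^2 + 1) = \<epsilon> ^ 2"
    using assms(1) by simp
  have "b ^ q * b = b ^ (q + 1)"
    by (simp add: mult.commute)
  then have "\<beta> ^ (q^2 + 1) = b ^ (q^3 + q^2 + q + 1) * \<epsilon> ^ (q^2 + 1)"
    by (simp only: assms(2) power_mult_distrib P_exponent_factor power_mult)
  then have "\<epsilon> ^ 2 = b ^ (q^3 + q^2 + q + 1) * \<epsilon> ^ 2"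
    by (simp only: assms(3) eps)
  then show ?thesis
    using \<open>\<epsilon> \<noteq> 0\<close> by (simp add: P_set_def mult_cancel_right1)
qed

lemma square_root_of_unity:
  assumes "(\<delta>::'a) ^ (q + 1) = 1"
  shows "\<exists>\<epsilon>. \<epsilon> ^ 2 = \<delta> \<and> \<epsilon> ^ (q + 1) = 1"
proof -
  have "even q"
    using q_def m_ge_1 by simp
  then obtain r where r: "q = 2 * r" ..
  define \<epsilon> where "\<epsilon> = \<delta> ^ (r + 1)"
  have "\<epsilon> ^ 2 = \<delta>"
    using assms by (simp add: \<epsilon>_def r algebra_simps flip: power_mult power_add)
  moreover have "\<epsilon> ^ (q + 1) = (\<delta> ^ (q + 1)) ^ (r + 1)"
    by (simp only: \<epsilon>_def mult.commute flip: power_mult)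
  ultimately show ?thesis
    using assms by auto
qed

lemma normal_form_exists:
  fixes \<alpha> \<beta> :: 'a
  assumes "\<beta> \<in> P_set q" "\<alpha> ^ (q + 1) = \<beta> ^ q + \<beta> ^ (q^2 + q + 1)"
  shows "\<exists>b \<epsilon>. b \<in> P_set q \<and> \<epsilon> ^ (q + 1) = 1 \<and> \<alpha> = b ^ q * (1 + \<epsilon>) \<and> \<beta> = b ^ q * b * \<epsilon>"
proof -
  define \<delta> where "\<delta> = \<beta> ^ (q^2 + 1)"
  have "\<delta> ^ (q + 1) = 1"
    using assms(1) unfolding P_set_def mem_Collect_eq P_exponent_factor \<delta>_def
    by (metis mult.commute power_mult)
  then obtain \<epsilon> where eps_sq: "\<epsilon> ^ 2 = \<delta>" and eps: "\<epsilon> ^ (q + 1) = 1"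
    using square_root_of_unity by blast
  have "\<beta> \<noteq> 0"
    using P_set_nonzero[OF assms(1)] .
  have coeff: "\<alpha> ^ (q + 1) = \<beta> ^ q * (1 + \<epsilon>) ^ 2"
  proof -
    have "(1 + \<epsilon>) ^ 2 = 1 + \<delta> + 2 * \<epsilon>"
      by (simp add: power2_eq_square algebra_simps flip: eps_sq)
    moreover have "\<beta> ^ (q^2 + q + 1) = \<beta> ^ q * \<delta>"
      by (simp add: \<delta>_def algebra_simps flip: power_add)
    ultimately show ?thesis
      using assms(2) by (simp add: two_eq_zero algebra_simps)
  qed
  obtain b where b: "\<alpha> = b ^ q * (1 + \<epsilon>)" "\<beta> = b ^ q * b * \<epsilon>"
  proof (cases "\<alpha> = 0")
    case True
    with coeff \<open>\<beta> \<noteq> 0\<close> q_ge_2 have "\<epsilon> = 1"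
      by (simp add: add_eq_0_iff_eq zero_power)
    with eps_sq have "\<beta> ^ (q^2 + 1) = 1"
      by (simp add: \<delta>_def)
    then obtain b where "b ^ q * b = \<beta>"
      using exists_power_q_plus_1_root by blast
    with True \<open>\<epsilon> = 1\<close> that[of b] show ?thesis
      by (simp add: two_eq_zero)
  next
    case False
    then show ?thesis
      using normal_form_coefficients[OF False eps coeff] that by blast
  qed
  moreover have "b \<in> P_set q"
    using normal_form_in_P_set[OF eps b(2) _ \<open>\<beta> \<noteq> 0\<close>] eps_sq by (simp add: \<delta>_def)
  ultimately show ?thesis
    using eps by blast
qed

end

theorem lemma2p3:
  fixes m q :: nat and \<alpha> \<beta> :: "'a::{field,finite}"
  assumes "m \<ge> 1" and "q = 2 ^ m"
    and "card (UNIV :: 'a set) = q ^ 4"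
    and "\<beta> \<in> P_set q"
    and "\<alpha> ^ (q + 1) = \<beta> ^ q + \<beta> ^ (q^2 + q + 1)"
  shows "card {x :: 'a. x ^ (q + 1) + \<alpha> * x + \<beta> = 0} = q + 1
    \<and> {x :: 'a. x ^ (q + 1) + \<alpha> * x + \<beta> = 0} \<subseteq> P_set q"
proof -
  obtain b \<epsilon> where "b \<in> P_set q" "\<epsilon> ^ (q + 1) = 1"
    and "\<alpha> = b ^ q * (1 + \<epsilon>)" "\<beta> = b ^ q * b * \<epsilon>"
    using normal_form_exists[OF assms] by blast
  then show ?thesis
    using roots_normal_form[OF assms(1-3)] by (simp add: mult.assoc)
qed

end
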